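(* Let $N$ be a connected smooth manifold and $F:N\to\mathbb{R}^n$ a local diffeomorphism with $0\in F(N)$. Let $R_t$ denote the radial flow on $\mathbb{R}^n$ generated by the vector field $-\sum_i y^i\,\partial/\partial y^i$ (i.e. $R_t(y)=e^{-t}y$). Suppose there is a complete flow $\widetilde R_t$ on $N$ lifting $R_t$, i.e. $F\circ\widetilde R_t=R_t\circ F$ for all $t\in\mathbb{R}$. Then $F$ is a diffeomorphism onto $\mathbb{R}^n$. *)

theory Defs
  imports "HOL-Analysis.Analysis"
begin

fun iter_pd :: "'a::euclidean_space list \<Rightarrow> ('a \<Rightarrow> real) \<Rightarrow> 'a \<Rightarrow> real" where
  "iter_pd [] g = g"
| "iter_pd (v # vs) g = (\<lambda>x. frechet_derivative (iter_pd vs g) (at x) v)"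

definition smooth_on :: "'a::euclidean_space set \<Rightarrow> ('a \<Rightarrow> 'b::euclidean_space) \<Rightarrow> bool" where
  "smooth_on S f \<longleftrightarrow>
     (\<forall>b\<in>Basis. \<forall>vs. set vs \<subseteq> Basis \<longrightarrow>
        (\<forall>x\<in>S. iter_pd vs (\<lambda>z. f z \<bullet> b) differentiable (at x)))"

definition smooth_manifold :: "'a topology \<Rightarrow> ('a set \<times> ('a \<Rightarrow> 'm::euclidean_space)) set \<Rightarrow> bool" where
  "smooth_manifold X A \<longleftrightarrow>
     Hausdorff_space X \<and> second_countable X \<and>
     (\<forall>(U,\<phi>)\<in>A. openin X U \<and> open (\<phi> ` U) \<and>
                  homeomorphic_map (subtopology X U) (top_of_set (\<phi> ` U)) \<phi>) \<and>
     (\<Union>(fst ` A) = topspace X) \<and>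
     (\<forall>(U,\<phi>)\<in>A. \<forall>(V,\<psi>)\<in>A. smooth_on (\<phi> ` (U \<inter> V)) (\<psi> \<circ> inv_into U \<phi>))"

definition smooth_map_to :: "'a topology \<Rightarrow> ('a set \<times> ('a \<Rightarrow> 'm::euclidean_space)) set
                               \<Rightarrow> ('a \<Rightarrow> 'e::euclidean_space) \<Rightarrow> bool" where
  "smooth_map_to X A F \<longleftrightarrow>
     continuous_map X euclidean F \<and>
     (\<forall>(U,\<phi>)\<in>A. smooth_on (\<phi> ` U) (F \<circ> inv_into U \<phi>))"

definition smooth_map_from :: "'e::euclidean_space set \<Rightarrow> 'a topology
                               \<Rightarrow> ('a set \<times> ('a \<Rightarrow> 'm::euclidean_space)) set \<Rightarrow> ('e \<Rightarrow> 'a) \<Rightarrow> bool" where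
  "smooth_map_from S X A G \<longleftrightarrow>
     continuous_map (top_of_set S) X G \<and>
     (\<forall>(U,\<phi>)\<in>A. smooth_on {y\<in>S. G y \<in> U} (\<phi> \<circ> G))"

definition local_diffeomorphism :: "'a topology \<Rightarrow> ('a set \<times> ('a \<Rightarrow> 'm::euclidean_space)) set
                               \<Rightarrow> ('a \<Rightarrow> 'e::euclidean_space) \<Rightarrow> bool" where
  "local_diffeomorphism X A F \<longleftrightarrow>
     smooth_map_to X A F \<and>
     (\<forall>x\<in>topspace X. \<exists>W. openin X W \<and> x \<in> W \<and> open (F ` W) \<and>
        homeomorphic_map (subtopology X W) (top_of_set (F ` W)) F \<and>
        smooth_map_from (F ` W) X A (inv_into W F))"

definition diffeomorphism_onto :: "'a topology \<Rightarrow> ('a set \<times> ('a \<Rightarrow> 'm::euclidean_space)) set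
                               \<Rightarrow> ('a \<Rightarrow> 'e::euclidean_space) \<Rightarrow> 'e set \<Rightarrow> bool" where
  "diffeomorphism_onto X A F S \<longleftrightarrow>
     smooth_map_to X A F \<and> F ` topspace X = S \<and> inj_on F (topspace X) \<and>
     smooth_map_from S X A (inv_into (topspace X) F)"

definition complete_smooth_flow :: "'a topology \<Rightarrow> ('a set \<times> ('a \<Rightarrow> 'm::euclidean_space)) set
                               \<Rightarrow> (real \<Rightarrow> 'a \<Rightarrow> 'a) \<Rightarrow> bool" where
  "complete_smooth_flow X A \<Phi> \<longleftrightarrow>
     (\<forall>t. \<forall>x\<in>topspace X. \<Phi> t x \<in> topspace X) \<and>
     (\<forall>x\<in>topspace X. \<Phi> 0 x = x) \<and>
     (\<forall>s t. \<forall>x\<in>topspace X. \<Phi> (s + t) x = \<Phi> s (\<Phi> t x)) \<and>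
     continuous_map (prod_topology euclideanreal X) X (\<lambda>(t,x). \<Phi> t x) \<and>
     (\<forall>(U,\<phi>)\<in>A. \<forall>(V,\<psi>)\<in>A.
        smooth_on {(t,v). v \<in> \<phi> ` U \<and> \<Phi> t (inv_into U \<phi> v) \<in> V}
                  (\<lambda>(t,v). \<psi> (\<Phi> t (inv_into U \<phi> v))))"

definition radial_flow :: "real \<Rightarrow> 'e::euclidean_space \<Rightarrow> 'e" where
  "radial_flow t y = exp (- t) *\<^sub>R y"

end

theory Submission
  imports Defs
begin

text \<open>The lifted flow covers the contraction of \<open>\<real>\<^sup>n\<close> towards 0, so every orbit eventually
  enters and stays in \<open>Q = F\<^sup>-\<^sup>1(B)\<close>, where B is a ball around 0 covered by a chart W at
  a preimage of 0. Q splits into the open pieces \<open>Q \<inter> W\<close> and \<open>Q - W\<close>, each forward invariant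
  because orbit segments are connected; the points whose orbits enter either piece then separate
  N, so connectedness forces \<open>Q \<subseteq> W\<close>. Injectivity of F on W transfers to N by flowing two
  points with the same image into Q, surjectivity by flowing a small preimage backwards, and a
  bijective local diffeomorphism has a smooth inverse because smoothness is a local property.\<close>

lemma iter_pd_cong_open:
  assumes "open S" "\<And>z. z \<in> S \<Longrightarrow> f z = g z" "z \<in> S"
  shows "iter_pd vs f z = iter_pd vs g z"
  using assms(3)
proof (induction vs arbitrary: z)
  case Nil
  then show ?case using assms(2) by simp
next
  case (Cons v vs)
  have "(iter_pd vs f has_derivative D) (at z) \<longleftrightarrow> (iter_pd vs g has_derivative D) (at z)" for D
  proof
    assume "(iter_pd vs f has_derivative D) (at z)"
    then show "(iter_pd vs g has_derivative D) (at z)"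
      by (rule has_derivative_transform_within_open[OF _ assms(1) Cons.prems]) (simp add: Cons.IH)
  next
    assume "(iter_pd vs g has_derivative D) (at z)"
    then show "(iter_pd vs f has_derivative D) (at z)"
      by (rule has_derivative_transform_within_open[OF _ assms(1) Cons.prems]) (simp add: Cons.IH)
  qed
  then show ?case by (simp add: frechet_derivative_def)
qed

lemma smooth_on_localI:
  fixes f :: "'a::euclidean_space \<Rightarrow> 'b::euclidean_space"
  assumes "\<And>x. x \<in> S \<Longrightarrow>
             \<exists>U T (g :: 'a \<Rightarrow> 'b). open U \<and> x \<in> U \<and> x \<in> T \<and> smooth_on T g \<and> (\<forall>z\<in>U. f z = g z)"
  shows "smooth_on S f"
  unfolding smooth_on_def
proof (intro ballI allI impI)
  fix b :: 'b and vs :: "'a list" and x assume b: "b \<in> Basis" and vs: "set vs \<subseteq> Basis" and x: "x \<in> S"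
  obtain U T g where U: "open U" "x \<in> U" "x \<in> T" "smooth_on T g" "\<forall>z\<in>U. f z = g z"
    using assms[OF x] by blast
  have "iter_pd vs (\<lambda>z. g z \<bullet> b) differentiable (at x)"
    using U(3,4) b vs unfolding smooth_on_def by blast
  then obtain D where "(iter_pd vs (\<lambda>z. g z \<bullet> b) has_derivative D) (at x)"
    unfolding differentiable_def by blast
  then have "(iter_pd vs (\<lambda>z. f z \<bullet> b) has_derivative D) (at x)"
    by (rule has_derivative_transform_within_open[OF _ U(1,2)])
       (use iter_pd_cong_open[OF U(1), of "\<lambda>z. f z \<bullet> b" "\<lambda>z. g z \<bullet> b"] U(5) in simp)
  then show "iter_pd vs (\<lambda>z. f z \<bullet> b) differentiable (at x)"
    unfolding differentiable_def by blast
qed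

lemma smooth_map_from_inv_into:
  assumes LD: "local_diffeomorphism X A F" and inj: "inj_on F (topspace X)"
  shows "smooth_map_from (F ` topspace X) X A (inv_into (topspace X) F)"
proof -
  define S where "S = F ` topspace X"
  define G where "G = inv_into (topspace X) F"
  define charts where "charts = {W. openin X W \<and> open (F ` W) \<and>
      smooth_map_from (F ` W) X A (inv_into W F) \<and> (\<forall>y\<in>F ` W. G y = inv_into W F y)}"
  have covered: "\<exists>W\<in>charts. y \<in> F ` W" if "y \<in> S" for y
  proof -
    obtain x where x: "x \<in> topspace X" "y = F x" using \<open>y \<in> S\<close> S_def by blast
    then obtain W where W: "openin X W" "x \<in> W" "open (F ` W)"
        "smooth_map_from (F ` W) X A (inv_into W F)"
      using LD unfolding local_diffeomorphism_def by blast
    have "G (F w) = inv_into W F (F w)" if "w \<in> W" for w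
      using that openin_subset[OF W(1)] inj_on_subset[OF inj] inj
      by (simp add: G_def inv_into_f_f subsetD)
    then have "W \<in> charts" using W unfolding charts_def by blast
    then show ?thesis using W(2) x(2) by blast
  qed
  have chart_sub: "F ` W \<subseteq> S" if "W \<in> charts" for W
    using that openin_subset unfolding charts_def S_def by blast
  have "continuous_map (top_of_set S) X G"
  proof (rule pasting_lemma[where T = "(`) F" and f = "\<lambda>_. G"])
    fix W assume W: "W \<in> charts"
    then show "openin (top_of_set S) (F ` W)"
      using chart_sub[OF W] W unfolding charts_def openin_open by blast
    have "continuous_map (top_of_set (F ` W)) X (inv_into W F)"
      using W unfolding charts_def smooth_map_from_def by blast
    moreover have "G y = inv_into W F y" if "y \<in> F ` W" for y
      using W that unfolding charts_def by blast
    ultimately show "continuous_map (subtopology (top_of_set S) (F ` W)) X G"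
      using chart_sub[OF W]
      by (simp add: subtopology_subtopology Int_absorb1) (metis continuous_map_eq topspace_euclidean_subtopology)
  qed (use covered in force)+
  moreover have "smooth_on {y \<in> S. G y \<in> U} (\<phi> \<circ> G)" if "(U, \<phi>) \<in> A" for U \<phi>
  proof (rule smooth_on_localI)
    fix y assume "y \<in> {y \<in> S. G y \<in> U}"
    then obtain W where W: "W \<in> charts" "y \<in> F ` W" "G y \<in> U" using covered by blast
    then have "smooth_on {y' \<in> F ` W. inv_into W F y' \<in> U} (\<phi> \<circ> inv_into W F)"
      using that unfolding charts_def smooth_map_from_def by blast
    then show "\<exists>V T g. open V \<and> y \<in> V \<and> y \<in> T \<and> smooth_on T g \<and> (\<forall>z\<in>V. (\<phi> \<circ> G) z = g z)"
      using W unfolding charts_def by (intro exI[of _ "F ` W"] exI conjI) auto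
  qed
  ultimately show ?thesis unfolding smooth_map_from_def S_def G_def by blast
qed

lemma diffeomorphism_onto_imageI:
  assumes "local_diffeomorphism X A F" and "inj_on F (topspace X)"
  shows "diffeomorphism_onto X A F (F ` topspace X)"
  using assms smooth_map_from_inv_into
  unfolding diffeomorphism_onto_def local_diffeomorphism_def by blast

lemma openin_non_fixed_points:
  assumes "Hausdorff_space X" and Q: "openin X Q" and f: "continuous_map (subtopology X Q) X f"
  shows "openin X {x \<in> Q. f x \<noteq> x}"
proof -
  have top: "topspace (subtopology X Q) = Q"
    using openin_subset[OF Q] by (simp add: Int_absorb1)
  have "closedin (subtopology X Q) {x \<in> Q. f x = x}"
    using closedin_continuous_maps_eq[OF assms(1) f continuous_map_from_subtopology[OF continuous_map_id]]
    unfolding top id_def .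
  then have "openin (subtopology X Q) (Q - {x \<in> Q. f x = x})"
    by (metis top openin_diff openin_topspace)
  moreover have "Q - {x \<in> Q. f x = x} = {x \<in> Q. f x \<noteq> x}" by blast
  ultimately show ?thesis using openin_trans_full[OF _ Q] by simp
qed

locale continuous_flow =
  fixes X :: "'a topology" and \<Phi> :: "real \<Rightarrow> 'a \<Rightarrow> 'a"
  assumes flow_in_topspace: "x \<in> topspace X \<Longrightarrow> \<Phi> t x \<in> topspace X"
    and flow_zero: "x \<in> topspace X \<Longrightarrow> \<Phi> 0 x = x"
    and flow_add: "x \<in> topspace X \<Longrightarrow> \<Phi> (s + t) x = \<Phi> s (\<Phi> t x)"
    and continuous_map_flow: "continuous_map (prod_topology euclideanreal X) X (\<lambda>(t, x). \<Phi> t x)"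
begin

lemma flow_inverse: "x \<in> topspace X \<Longrightarrow> \<Phi> (- t) (\<Phi> t x) = x"
  by (metis flow_add flow_zero add.left_inverse)

lemma continuous_map_flow_at: "continuous_map X X (\<Phi> t)"
proof -
  have "continuous_map X (prod_topology euclideanreal X) (\<lambda>x. (t, x))"
    by (intro continuous_map_pairedI) auto
  from continuous_map_compose[OF this continuous_map_flow] show ?thesis
    by (simp add: o_def)
qed

lemma continuous_map_orbit:
  assumes "x \<in> topspace X"
  shows "continuous_map euclideanreal X (\<lambda>t. \<Phi> t x)"
proof -
  have "continuous_map euclideanreal (prod_topology euclideanreal X) (\<lambda>t. (t, x))"
    using assms by (intro continuous_map_pairedI) auto
  from continuous_map_compose[OF this continuous_map_flow] show ?thesis
    by (simp add: o_def)
qed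

lemma flow_stays_in_open:
  assumes E: "openin X E" and D: "openin X D" and "disjnt E D" and "x \<in> E"
    and orbit_in: "\<And>t. t \<ge> 0 \<Longrightarrow> \<Phi> t x \<in> E \<union> D" and "t \<ge> 0"
  shows "\<Phi> t x \<in> E"
proof -
  let ?orbit = "(\<lambda>s. \<Phi> s x) ` {0..}"
  have x: "x \<in> topspace X" using E \<open>x \<in> E\<close> openin_subset by blast
  have "connectedin X ?orbit"
    by (rule connectedin_continuous_map_image[OF continuous_map_orbit[OF x]]) simp
  moreover have "?orbit \<subseteq> E \<union> D" and "E \<inter> D \<inter> ?orbit = {}"
    using orbit_in \<open>disjnt E D\<close> by (auto simp: disjnt_def)
  moreover have "E \<inter> ?orbit \<noteq> {}"
    using flow_zero[OF x] \<open>x \<in> E\<close> by force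
  ultimately have "D \<inter> ?orbit = {}"
    using connectedinD[OF _ E D] by blast
  then show ?thesis using orbit_in \<open>t \<ge> 0\<close> by auto
qed

text \<open>The points whose orbits enter E and those whose orbits enter D form two disjoint open sets
  covering X.\<close>
lemma absorbing_set_not_split:
  assumes "connected_space X" and E: "openin X E" and D: "openin X D" and "disjnt E D" "E \<noteq> {}"
    and invariant: "\<And>x t. x \<in> E \<union> D \<Longrightarrow> t \<ge> 0 \<Longrightarrow> \<Phi> t x \<in> E \<union> D"
    and absorbing: "\<And>x. x \<in> topspace X \<Longrightarrow> \<exists>s\<ge>0. \<Phi> s x \<in> E \<union> D"
  shows "D = {}"
proof -
  define basin where "basin S = {x \<in> topspace X. \<exists>s\<ge>0. \<Phi> s x \<in> S}" for S
  have open_basin: "openin X (basin S)" if "openin X S" for S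
  proof -
    have "basin S = (\<Union>s\<in>{0..}. {x \<in> topspace X. \<Phi> s x \<in> S})"
      by (auto simp: basin_def)
    then show ?thesis
      using openin_continuous_map_preimage[OF continuous_map_flow_at that] by auto
  qed
  have E_stays: "\<Phi> t x \<in> E" if "x \<in> E" "t \<ge> 0" for x t
    by (rule flow_stays_in_open[OF E D \<open>disjnt E D\<close> that(1) _ that(2)])
       (use invariant that(1) in blast)
  have D_stays: "\<Phi> t x \<in> D" if "x \<in> D" "t \<ge> 0" for x t
    by (rule flow_stays_in_open[OF D E _ that(1) _ that(2)])
       (use invariant that(1) \<open>disjnt E D\<close> in \<open>auto simp: disjnt_sym\<close>)
  have in_basin: "S \<subseteq> basin S" if "openin X S" for S
    using flow_zero openin_subset[OF that] by (force simp: basin_def)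
  have "basin E \<inter> basin D = {}"
  proof (rule ccontr)
    assume "basin E \<inter> basin D \<noteq> {}"
    then obtain x s u where x: "x \<in> topspace X" and s: "s \<ge> 0" "\<Phi> s x \<in> E"
      and u: "u \<ge> 0" "\<Phi> u x \<in> D"
      unfolding basin_def by blast
    define m where "m = max s u"
    have "\<Phi> m x = \<Phi> (m - s) (\<Phi> s x)" "\<Phi> m x = \<Phi> (m - u) (\<Phi> u x)"
      using flow_add[OF x, of "m - s" s] flow_add[OF x, of "m - u" u] by simp_all
    moreover have "m - s \<ge> 0" "m - u \<ge> 0" by (simp_all add: m_def)
    ultimately have "\<Phi> m x \<in> E" "\<Phi> m x \<in> D"
      using E_stays[OF s(2)] D_stays[OF u(2)] by metis+
    then show False using \<open>disjnt E D\<close> by (auto simp: disjnt_def)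
  qed
  moreover have "basin E \<union> basin D = topspace X"
    using absorbing by (auto simp: basin_def)
  moreover have "basin E \<noteq> {}"
    using in_basin[OF E] \<open>E \<noteq> {}\<close> by blast
  ultimately have "basin D = {}"
    using \<open>connected_space X\<close> open_basin[OF E] open_basin[OF D]
    unfolding connected_space_eq by blast
  then show ?thesis using in_basin[OF D] by blast
qed

end

lemma radial_flow_add: "radial_flow s (radial_flow t y) = radial_flow (s + t) y"
  by (simp add: radial_flow_def mult_exp_exp)

lemma norm_radial_flow: "norm (radial_flow t y) = exp (- t) * norm y"
  by (simp add: radial_flow_def)

lemma radial_flow_enters_ball:
  assumes "r > 0"
  shows "\<exists>s\<ge>0. radial_flow s y \<in> ball 0 r"
proof -
  define s where "s = norm y / r"
  have "norm y < r * exp s"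
    using exp_ge_add_one_self[of s] assms by (simp add: s_def field_simps)
  then have "norm (radial_flow s y) < r"
    by (simp add: norm_radial_flow exp_minus field_simps)
  moreover have "s \<ge> 0" using assms by (simp add: s_def)
  ultimately show ?thesis by auto
qed

locale radial_lift = continuous_flow X \<Phi>
  for X :: "'a topology" and \<Phi> :: "real \<Rightarrow> 'a \<Rightarrow> 'a" +
  fixes F :: "'a \<Rightarrow> 'e::euclidean_space"
  assumes continuous_map_lift: "continuous_map X euclidean F"
    and lift_flow: "x \<in> topspace X \<Longrightarrow> F (\<Phi> t x) = radial_flow t (F x)"
begin

lemma preimage_ball_forward_invariant:
  assumes "x \<in> topspace X" "F x \<in> ball 0 r" "t \<ge> 0"
  shows "F (\<Phi> t x) \<in> ball 0 r"
proof -
  have "norm (F (\<Phi> t x)) = exp (- t) * norm (F x)"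
    using assms(1) by (simp add: lift_flow norm_radial_flow)
  also have "\<dots> \<le> norm (F x)"
    using assms(3) by (intro mult_left_le_one_le) auto
  finally show ?thesis using assms(2) by simp
qed

lemma preimage_ball_absorbing:
  assumes "r > 0" "x \<in> topspace X"
  shows "\<exists>s\<ge>0. F (\<Phi> s x) \<in> ball 0 r"
  using radial_flow_enters_ball[OF assms(1)] lift_flow[OF assms(2)] by metis

lemma lift_image_eq_UNIV:
  assumes "0 \<in> interior (F ` topspace X)"
  shows "F ` topspace X = UNIV"
proof -
  obtain r where "r > 0" and r: "ball 0 r \<subseteq> F ` topspace X"
    using assms by (meson mem_interior)
  have "y \<in> F ` topspace X" for y
  proof -
    obtain s where "radial_flow s y \<in> ball 0 r"
      using radial_flow_enters_ball[OF \<open>r > 0\<close>] by blast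
    then obtain x where x: "x \<in> topspace X" "F x = radial_flow s y"
      using r by (metis imageE subsetD)
    then have "F (\<Phi> (- s) x) = y"
      by (simp add: lift_flow radial_flow_add radial_flow_def flip: exp_add)
    then show ?thesis using flow_in_topspace[OF x(1)] by blast
  qed
  then show ?thesis by blast
qed

lemma inj_on_if_inj_on_preimage_ball:
  assumes "r > 0" and W: "{x \<in> topspace X. F x \<in> ball 0 r} \<subseteq> W" and "inj_on F W"
  shows "inj_on F (topspace X)"
proof (rule inj_onI)
  fix x x' assume x: "x \<in> topspace X" and x': "x' \<in> topspace X" and "F x = F x'"
  obtain s where "s \<ge> 0" and s: "F (\<Phi> s x) \<in> ball 0 r"
    using preimage_ball_absorbing[OF \<open>r > 0\<close> x] by blast
  have "F (\<Phi> s x) = F (\<Phi> s x')"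
    using x x' \<open>F x = F x'\<close> by (simp add: lift_flow)
  moreover have "\<Phi> s x \<in> W" "\<Phi> s x' \<in> W"
    using W s calculation flow_in_topspace x x' by auto
  ultimately have "\<Phi> s x = \<Phi> s x'"
    using \<open>inj_on F W\<close> by (simp add: inj_on_eq_iff)
  then show "x = x'"
    using flow_inverse x x' by metis
qed

lemma preimage_ball_subset_chart:
  assumes "Hausdorff_space X" "connected_space X"
    and "openin X W" "inj_on F W" and g: "continuous_map (top_of_set (F ` W)) X (inv_into W F)"
    and "r > 0" and ball: "ball 0 r \<subseteq> F ` W"
  shows "{x \<in> topspace X. F x \<in> ball 0 r} \<subseteq> W"
proof -
  define Q where "Q = {x \<in> topspace X. F x \<in> ball 0 r}"
  define g where "g = inv_into W F"
  have Q: "openin X Q"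
    unfolding Q_def by (rule openin_continuous_map_preimage[OF continuous_map_lift]) simp
  have fixed_iff: "g (F x) = x \<longleftrightarrow> x \<in> W" if "x \<in> Q" for x
  proof
    have "F x \<in> F ` W" using that ball unfolding Q_def by auto
    then show "g (F x) = x \<Longrightarrow> x \<in> W" unfolding g_def by (metis inv_into_into)
  qed (simp add: g_def inv_into_f_f \<open>inj_on F W\<close>)
  have "continuous_map (subtopology X Q) (top_of_set (F ` W)) F"
    using ball by (intro continuous_map_into_subtopology continuous_map_from_subtopology
        continuous_map_lift) (auto simp: Q_def)
  then have gF: "continuous_map (subtopology X Q) X (g \<circ> F)"
    using continuous_map_compose g unfolding g_def by blast
  have D: "openin X {x \<in> Q. g (F x) \<noteq> x}" \<comment> \<open>this is \<open>Q - W\<close>\<close>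
    using openin_non_fixed_points[OF \<open>Hausdorff_space X\<close> Q gF] by simp
  have E: "openin X (W \<inter> Q)"
    using Q \<open>openin X W\<close> by blast
  have split: "W \<inter> Q \<union> {x \<in> Q. g (F x) \<noteq> x} = Q"
    using fixed_iff by blast
  obtain p where "p \<in> W" "F p = 0"
    using ball \<open>r > 0\<close> by (metis centre_in_ball imageE subsetD)
  then have "W \<inter> Q \<noteq> {}"
    using \<open>r > 0\<close> openin_subset[OF \<open>openin X W\<close>] by (force simp: Q_def)
  moreover have "disjnt (W \<inter> Q) {x \<in> Q. g (F x) \<noteq> x}"
    using fixed_iff by (auto simp: disjnt_def)
  moreover have "\<Phi> t x \<in> Q" if "x \<in> Q" "t \<ge> 0" for x t
    using that preimage_ball_forward_invariant flow_in_topspace by (simp add: Q_def)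
  moreover have "\<exists>s\<ge>0. \<Phi> s x \<in> Q" if "x \<in> topspace X" for x
    using preimage_ball_absorbing[OF \<open>r > 0\<close> that] flow_in_topspace[OF that] by (auto simp: Q_def)
  ultimately have "{x \<in> Q. g (F x) \<noteq> x} = {}"
    using absorbing_set_not_split[OF \<open>connected_space X\<close> E D] unfolding split by blast
  then show ?thesis
    using fixed_iff unfolding Q_def[symmetric] by blast
qed

end

theorem corollary1:
  fixes X :: "'a topology"
    and A :: "('a set \<times> ('a \<Rightarrow> 'm::euclidean_space)) set"
    and F :: "'a \<Rightarrow> 'e::euclidean_space"
    and \<Phi> :: "real \<Rightarrow> 'a \<Rightarrow> 'a"
  assumes "smooth_manifold X A"
    and "connected_space X"
    and "local_diffeomorphism X A F"
    and "0 \<in> F ` topspace X"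
    and "complete_smooth_flow X A \<Phi>"
    and "\<forall>t. \<forall>x\<in>topspace X. F (\<Phi> t x) = radial_flow t (F x)"
  shows "diffeomorphism_onto X A F UNIV"
proof -
  interpret radial_lift X \<Phi> F
    using assms(3,5,6) by unfold_locales
      (auto simp: complete_smooth_flow_def local_diffeomorphism_def smooth_map_to_def)
  obtain p where p: "p \<in> topspace X" "F p = 0"
    using assms(4) by force
  then obtain W where W: "openin X W" "p \<in> W" "open (F ` W)"
      "homeomorphic_map (subtopology X W) (top_of_set (F ` W)) F"
      "smooth_map_from (F ` W) X A (inv_into W F)"
    using assms(3) unfolding local_diffeomorphism_def by blast
  obtain r where r: "r > 0" "ball 0 r \<subseteq> F ` W"
    using W(2,3) p(2) open_contains_ball by (metis image_eqI)
  have "Hausdorff_space X"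
    using assms(1) unfolding smooth_manifold_def by blast
  moreover have "inj_on F W"
    using homeomorphic_imp_injective_map[OF W(4)] openin_subset[OF W(1)] by (simp add: Int_absorb1)
  moreover have "continuous_map (top_of_set (F ` W)) X (inv_into W F)"
    using W(5) unfolding smooth_map_from_def by blast
  ultimately have "{x \<in> topspace X. F x \<in> ball 0 r} \<subseteq> W"
    using preimage_ball_subset_chart[OF _ assms(2) W(1)] r by blast
  then have "inj_on F (topspace X)"
    using inj_on_if_inj_on_preimage_ball r(1) \<open>inj_on F W\<close> by blast
  moreover have "F ` topspace X = UNIV"
  proof (rule lift_image_eq_UNIV)
    show "0 \<in> interior (F ` topspace X)"
      using W(1-3) p(2) openin_subset by (intro interiorI[of "F ` W"]) auto
  qed
  ultimately show ?thesis
    using diffeomorphism_onto_imageI[OF assms(3)] by simp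
qed

end
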